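(* For an integer $p\ge1$ let $F_p(s)=-\sum_{j=1}^\infty\ln(1-e^{j^ps})$ for $s<0$. Then for every pair of integers $p\ge1$ and $m\ge0$, $$F_p^{(m)}(-s)\sim\frac1p\,\zeta(1+1/p)\,\Gamma(m+1/p)\,\frac{1}{s^{m+1/p}},\quad\text{as } s\downarrow0.$$
   Context: $F_p$ is the fulcrum $s\mapsto\ln G_p(e^s)$ of $G_p(z)=\prod_{j\ge1}(1-z^{j^p})^{-1}$, the generating function of partitions into $p$-th powers. $F_p^{(m)}$ denotes the $m$-th derivative ($F_p^{(0)}=F_p$). $\alpha(s)\sim\beta(s)$ means $\alpha(s)/\beta(s)\to1$. $\zeta$ is the Riemann zeta function and $\Gamma$ the Gamma function. *)

theory Defs
  imports "HOL-Analysis.Analysis" "HOL-Library.Landau_Symbols"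
begin

definition zeta_real :: "real \<Rightarrow> real" where
  "zeta_real x = (\<Sum>n. 1 / (real (Suc n)) powr x)"

definition fulcrum :: "nat \<Rightarrow> real \<Rightarrow> real" where
  "fulcrum p s = - (\<Sum>j. ln (1 - exp (real (Suc j) ^ p * s)))"

end

theory Submission
  imports Defs "HOL-Real_Asymp.Real_Asymp"
begin

(*
  Expanding -ln (1 - x) into its power series writes F_p^(m)(t) as the double series
  sum_j sum_k j^(p m) k^(m-1) exp (k j^p t).  For m = 0, summing over j first gives
  F_p(-s) = sum_k theta(k s) / k with theta(x) = sum_j exp (-x j^p).  A Riemann-sum comparison
  with the integral of exp (-u^p) over [0, oo), which is Gamma(1/p)/p, shows
  x^(1/p) theta(x) --> Gamma(1/p)/p, and Tannery's theorem gives
  s^(1/p) F_p(-s) --> zeta(1 + 1/p) Gamma(1/p)/p.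
  All derivatives F_p^(m) are nonnegative on (-oo, 0), so F_p^(m+1)(-s) decreases in s and the
  monotone density theorem differentiates the asymptotics of F_p^(m)(-s): the constant gains
  the factor m + 1/p, which turns Gamma(m + 1/p) into Gamma(m + 1 + 1/p).
*)

lemma summable_powr_mult_exp:
  fixes b r :: real
  assumes "b < 0"
  shows "summable (\<lambda>k. real (Suc k) powr r * exp (real (Suc k) * b))"
proof (rule summable_comparison_test_ev)
  have "((\<lambda>k::nat. real (Suc k) powr r * exp (real (Suc k) * b / 2)) \<longlongrightarrow> 0) at_top"
    using assms by real_asymp
  then have small: "\<forall>\<^sub>F k in sequentially. real (Suc k) powr r * exp (real (Suc k) * b / 2) < 1"
    by (rule order_tendstoD) simp
  show "\<forall>\<^sub>F k in sequentially. norm (real (Suc k) powr r * exp (real (Suc k) * b)) \<le> exp (b / 2) ^ Suc k"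
    using small
  proof eventually_elim
    case (elim k)
    have "norm (real (Suc k) powr r * exp (real (Suc k) * b))
        = (real (Suc k) powr r * exp (real (Suc k) * b / 2)) * exp (real (Suc k) * (b / 2))"
      by (simp del: of_nat_Suc flip: exp_add)
    also have "\<dots> \<le> exp (real (Suc k) * (b / 2))"
      using elim by (intro mult_left_le_one_le) auto
    finally show ?case by (simp only: exp_of_nat_mult)
  qed
  show "summable (\<lambda>k. exp (b / 2) ^ Suc k)"
    using assms by (simp add: summable_geometric)
qed

lemma summable_zeta_real_terms:
  assumes "x > 1"
  shows "summable (\<lambda>n. 1 / real (Suc n) powr x)"
proof -
  have "summable (\<lambda>n. real n powr (- x))"
    using assms by (subst summable_real_powr_iff) simp
  then have "summable (\<lambda>n. real (Suc n) powr (- x))"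
    by (subst summable_Suc_iff)
  then show ?thesis
    by (simp add: powr_minus_divide del: of_nat_Suc)
qed

lemma zeta_real_pos: "x > 1 \<Longrightarrow> zeta_real x > 0"
  unfolding zeta_real_def by (intro suminf_pos summable_zeta_real_terms) auto

lemma sums_swap_nonneg:
  fixes u :: "nat \<Rightarrow> nat \<Rightarrow> real"
  assumes nonneg: "\<And>j k. 0 \<le> u j k"
    and rows: "\<And>j. summable (u j)"
    and row_sums: "summable (\<lambda>j. \<Sum>k. u j k)"
  shows "(\<lambda>k. \<Sum>j. u j k) sums (\<Sum>j. \<Sum>k. u j k)"
proof -
  define r where "r j = (\<Sum>k. u j k)" for j
  have row_has_sum: "(u j has_sum r j) UNIV" for j
    unfolding r_def by (rule sums_nonneg_imp_has_sum[OF summable_sums[OF rows] nonneg])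
  have "(r has_sum (\<Sum>j. r j)) UNIV"
    using row_sums by (intro sums_nonneg_imp_has_sum summable_sums)
      (auto simp: r_def[abs_def] intro!: suminf_nonneg rows nonneg)
  then have "((\<lambda>(j, k). u j k) has_sum (\<Sum>j. r j)) (UNIV \<times> UNIV)"
    using row_has_sum nonneg
    by (intro has_sum_SigmaI[where g=r] summable_on_SigmaI[where g=r])
       (auto simp: summable_on_def)
  then have swapped: "((\<lambda>(k, j). u j k) has_sum (\<Sum>j. r j)) (UNIV \<times> UNIV)"
    by (subst (asm) has_sum_swap) simp
  have "(\<lambda>j. u j k) summable_on UNIV" for k
    using summable_on_SigmaD1[of "\<lambda>k j. u j k" UNIV "\<lambda>_. UNIV" k] swapped
    by (auto simp: summable_on_def)
  then have "((\<lambda>j. u j k) has_sum (\<Sum>j. u j k)) UNIV" for k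
    using nonneg summable_on_UNIV_nonneg_real_iff
    by (intro sums_nonneg_imp_has_sum summable_sums) auto
  then have "((\<lambda>k. \<Sum>j. u j k) has_sum (\<Sum>j. r j)) UNIV"
    by (intro has_sum_Sigma'[OF swapped]) simp
  then show ?thesis
    unfolding r_def by (rule has_sum_imp_sums)
qed

lemma has_real_derivative_suminf_dominated:
  fixes f f' :: "nat \<Rightarrow> real \<Rightarrow> real"
  assumes deriv: "\<And>k x. x \<le> b \<Longrightarrow> (f k has_real_derivative f' k x) (at x)"
    and dominated: "\<And>k x. x \<le> b \<Longrightarrow> \<bar>f' k x\<bar> \<le> M k"
    and "summable M" "summable (\<lambda>k. f k u)" "u < b"
  shows "((\<lambda>x. \<Sum>k. f k x) has_real_derivative (\<Sum>k. f' k u)) (at u)"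
proof (rule has_field_derivative_series'(2)[where S="{..b}"])
  show "uniformly_convergent_on {..b} (\<lambda>n x. \<Sum>k<n. f' k x)"
    using dominated \<open>summable M\<close> by (intro Weierstrass_m_test') auto
qed (use assms in \<open>auto intro: has_field_derivative_at_within\<close>)

lemma tendsto_integral_Icc_at_top:
  fixes f :: "real \<Rightarrow> 'a::banach"
  assumes "(f has_integral I) {a..}"
  shows "((\<lambda>y. integral {a..y} f) \<longlongrightarrow> I) at_top"
proof (rule tendstoI)
  fix e :: real assume "e > 0"
  with assms obtain B where B: "\<And>c d. ball 0 B \<subseteq> cbox c d \<Longrightarrow>
      norm (integral (cbox c d) (\<lambda>x. if x \<in> {a..} then f x else 0) - I) < e"
    unfolding has_integral_alt' by blast
  have "norm (integral {a..y} f - I) < e" if "y \<ge> B" for y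
  proof -
    have "ball 0 B \<subseteq> cbox (min a (- B)) y"
      using that by (auto simp: dist_real_def)
    moreover have "{a..} \<inter> cbox (min a (- B)) y = {a..y}"
      by auto
    ultimately show ?thesis
      using B[of "min a (- B)" y] by (simp only: integral_restrict_Int)
  qed
  then show "\<forall>\<^sub>F y in at_top. dist (integral {a..y} f) I < e"
    by (auto simp: dist_norm eventually_at_top_linorder)
qed

lemma integral_decreasing_bounds:
  fixes f :: "real \<Rightarrow> real"
  assumes "a \<le> b" "f integrable_on {a..b}"
    and decr: "\<And>x y. a \<le> x \<Longrightarrow> x \<le> y \<Longrightarrow> y \<le> b \<Longrightarrow> f y \<le> f x"
  shows "(b - a) * f b \<le> integral {a..b} f" "integral {a..b} f \<le> (b - a) * f a"
proof -
  have "integral {a..b} (\<lambda>_. f b) \<le> integral {a..b} f"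
    using assms by (intro integral_le) (auto intro!: decr)
  then show "(b - a) * f b \<le> integral {a..b} f"
    using \<open>a \<le> b\<close> by simp
  have "integral {a..b} f \<le> integral {a..b} (\<lambda>_. f a)"
    using assms by (intro integral_le) (auto intro!: decr)
  then show "integral {a..b} f \<le> (b - a) * f a"
    using \<open>a \<le> b\<close> by simp
qed

lemma integral_Icc_eq_sum_steps:
  fixes f :: "real \<Rightarrow> real"
  assumes "\<And>y. f integrable_on {0..y}" "h \<ge> 0"
  shows "integral {0..h * real N} f = (\<Sum>j<N. integral {h * real j..h * real (Suc j)} f)"
proof (induction N)
  case (Suc N)
  have "integral {0..h * real (Suc N)} f
      = integral {0..h * real N} f + integral {h * real N..h * real (Suc N)} f"
    using assms by (intro Henstock_Kurzweil_Integration.integral_combine[symmetric]) (auto intro: mult_left_mono)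
  with Suc show ?case by simp
qed simp

lemma integral_Icc_multiple_bounds:
  fixes f :: "real \<Rightarrow> real"
  assumes cont: "continuous_on {0..} f"
    and decr: "\<And>x y. 0 \<le> x \<Longrightarrow> x \<le> y \<Longrightarrow> f y \<le> f x"
    and "h > 0"
  shows "h * (\<Sum>j<N. f (h * real (Suc j))) \<le> integral {0..h * real N} f"
    and "integral {0..h * real N} f \<le> h * (\<Sum>j<N. f (h * real j))"
proof -
  have integrable: "f integrable_on {a..b}" if "0 \<le> a" for a b
    using that by (intro integrable_continuous_interval continuous_on_subset[OF cont]) auto
  have step_bounds:
    "h * f (h * real (Suc j)) \<le> integral {h * real j..h * real (Suc j)} f"
    "integral {h * real j..h * real (Suc j)} f \<le> h * f (h * real j)" for j
  proof -
    have le: "h * real j \<le> h * real (Suc j)" and nonneg: "0 \<le> h * real j"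
      using \<open>h > 0\<close> by simp_all
    have "f y \<le> f x" if "h * real j \<le> x" "x \<le> y" for x y
      using that nonneg by (meson decr order_trans)
    from integral_decreasing_bounds[OF le integrable[OF nonneg] this]
    show "h * f (h * real (Suc j)) \<le> integral {h * real j..h * real (Suc j)} f"
      "integral {h * real j..h * real (Suc j)} f \<le> h * f (h * real j)"
      by (simp_all add: algebra_simps)
  qed
  have steps: "integral {0..h * real N} f = (\<Sum>j<N. integral {h * real j..h * real (Suc j)} f)"
    using \<open>h > 0\<close> by (intro integral_Icc_eq_sum_steps integrable) auto
  show "h * (\<Sum>j<N. f (h * real (Suc j))) \<le> integral {0..h * real N} f"
    "integral {0..h * real N} f \<le> h * (\<Sum>j<N. f (h * real j))"
    unfolding steps sum_distrib_left by (intro sum_mono step_bounds)+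
qed

lemma decreasing_riemann_sum_le_integral:
  fixes f :: "real \<Rightarrow> real"
  assumes cont: "continuous_on {0..} f"
    and nonneg: "\<And>x. 0 \<le> x \<Longrightarrow> 0 \<le> f x"
    and decr: "\<And>x y. 0 \<le> x \<Longrightarrow> x \<le> y \<Longrightarrow> f y \<le> f x"
    and int: "(f has_integral I) {0..}"
    and "h > 0"
  shows "summable (\<lambda>j. f (h * real (Suc j)))"
    and "h * (\<Sum>j. f (h * real (Suc j))) \<le> I"
proof -
  have partial_le: "h * (\<Sum>j<N. f (h * real (Suc j))) \<le> I" for N
  proof -
    note integral_Icc_multiple_bounds(1)[OF cont decr \<open>h > 0\<close>, of N]
    also have "integral {0..h * real N} f \<le> integral {0..} f"
      using \<open>h > 0\<close> int cont
      by (intro integral_subset_le integrable_continuous_interval)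
         (auto intro: nonneg continuous_on_subset)
    finally show ?thesis
      using int by (simp add: integral_unique)
  qed
  have terms_nonneg: "0 \<le> f (h * real (Suc j))" for j
    using \<open>h > 0\<close> by (intro nonneg) simp
  show summable: "summable (\<lambda>j. f (h * real (Suc j)))"
  proof (rule bounded_imp_summable[OF terms_nonneg])
    fix n
    show "(\<Sum>j\<le>n. f (h * real (Suc j))) \<le> I / h"
      using partial_le[of "Suc n"] \<open>h > 0\<close>
      by (simp add: lessThan_Suc_atMost field_simps del: of_nat_Suc)
  qed
  have "(\<Sum>j. f (h * real (Suc j))) \<le> I / h"
    using partial_le \<open>h > 0\<close> by (intro suminf_le_const summable) (simp add: field_simps)
  then show "h * (\<Sum>j. f (h * real (Suc j))) \<le> I"
    using \<open>h > 0\<close> by (simp add: field_simps)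
qed

lemma integral_le_decreasing_riemann_sum:
  fixes f :: "real \<Rightarrow> real"
  assumes cont: "continuous_on {0..} f"
    and nonneg: "\<And>x. 0 \<le> x \<Longrightarrow> 0 \<le> f x"
    and decr: "\<And>x y. 0 \<le> x \<Longrightarrow> x \<le> y \<Longrightarrow> f y \<le> f x"
    and int: "(f has_integral I) {0..}"
    and "h > 0"
  shows "I \<le> h * f 0 + h * (\<Sum>j. f (h * real (Suc j)))"
proof -
  have "integral {0..h * real N} f \<le> h * f 0 + h * (\<Sum>j. f (h * real (Suc j)))" for N
  proof -
    note integral_Icc_multiple_bounds(2)[OF cont decr \<open>h > 0\<close>, of N]
    also have "h * (\<Sum>j<N. f (h * real j)) \<le> h * (\<Sum>j<Suc N. f (h * real j))"
      using \<open>h > 0\<close> by (intro mult_left_mono sum_mono2) (auto intro!: nonneg)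
    also have "\<dots> = h * f 0 + h * (\<Sum>j<N. f (h * real (Suc j)))"
      by (subst sum.lessThan_Suc_shift) (simp add: algebra_simps del: of_nat_Suc)
    also have "\<dots> \<le> h * f 0 + h * (\<Sum>j. f (h * real (Suc j)))"
      using \<open>h > 0\<close> decreasing_riemann_sum_le_integral(1)[OF assms]
      by (intro add_left_mono mult_left_mono sum_le_suminf) (auto intro: nonneg)
    finally show ?thesis .
  qed
  moreover have "filterlim (\<lambda>N. h * real N) at_top sequentially"
    using \<open>h > 0\<close>
    by (intro filterlim_tendsto_pos_mult_at_top filterlim_real_sequentially) auto
  then have "(\<lambda>N. integral {0..h * real N} f) \<longlonglongrightarrow> I"
    by (rule filterlim_compose[OF tendsto_integral_Icc_at_top[OF int]])
  ultimately show ?thesis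
    by (intro LIMSEQ_le_const2) auto
qed

lemma power_powr_inverse:
  assumes "p \<ge> 1" "x > 0"
  shows "(x powr (1 / real p)) ^ p = (x :: real)"
  using assms by (simp add: root_powr_inverse[symmetric] real_root_pow_pos2)

lemma has_integral_Ici_iff_Ioi:
  fixes f :: "real \<Rightarrow> 'a::banach"
  shows "(f has_integral I) {a..} \<longleftrightarrow> (f has_integral I) {a<..}"
  by (rule has_integral_spike_set_eq; rule negligible_subset[of "{a}"]) auto

lemma power_image_Ioi:
  assumes "p \<ge> 1"
  shows "(\<lambda>u::real. u ^ p) ` {0<..} = {0<..}"
proof
  show "{0<..} \<subseteq> (\<lambda>u::real. u ^ p) ` {0<..}"
  proof
    fix t :: real assume "t \<in> {0<..}"
    with assms show "t \<in> (\<lambda>u. u ^ p) ` {0<..}"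
      by (intro image_eqI[of _ _ "root p t"]) (auto simp: real_root_pow_pos2)
  qed
qed auto
lemma power_substitution_Gamma_integrand:
  fixes u :: real
  assumes p: "p \<ge> 1" and "u > 0"
  shows "\<bar>real p * u ^ (p - 1)\<bar> * ((u ^ p) powr (1 / real p - 1) / exp (u ^ p) / real p) = exp (- (u ^ p))"
proof -
  have "(u ^ p) powr (1 / real p - 1) = u powr (real p * (1 / real p - 1))"
    using \<open>u > 0\<close> by (simp add: powr_realpow[symmetric] powr_powr)
  also have "real p * (1 / real p - 1) = 1 - real p"
    using p by (simp add: field_simps)
  finally have "\<bar>real p * u ^ (p - 1)\<bar> * ((u ^ p) powr (1 / real p - 1) / exp (u ^ p) / real p)
      = (u ^ (p - 1) * u powr (1 - real p)) / exp (u ^ p)"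
    using \<open>u > 0\<close> p by simp
  also have "u ^ (p - 1) * u powr (1 - real p) = 1"
    using \<open>u > 0\<close> p by (simp add: powr_realpow[symmetric] of_nat_diff flip: powr_add)
  finally show ?thesis
    by (simp add: exp_minus inverse_eq_divide)
qed

lemma has_integral_exp_neg_power:
  assumes p: "p \<ge> 1"
  shows "((\<lambda>u. exp (- (u ^ p))) has_integral Gamma (1 / real p) / real p) {0..}"
proof -
  define G where "G = Gamma (1 / real p) / real p"
  define F where "F t = t powr (1 / real p - 1) / exp t / real p" for t :: real
  have "((\<lambda>t. t powr (1 / real p - 1) / exp t) has_integral Gamma (1 / real p)) {0..}"
    using p by (intro Gamma_integral_real) simp
  then have "(F has_integral G) {0..}"
    unfolding F_def G_def by (rule has_integral_divide)
  then have F_int: "(F has_integral G) {0<..}"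
    by (simp add: has_integral_Ici_iff_Ioi)
  then have "F absolutely_integrable_on {0<..}"
    by (intro nonnegative_absolutely_integrable_1) (auto simp: F_def)
  with F_int have F_image: "F absolutely_integrable_on (\<lambda>u. u ^ p) ` {0<..} \<and>
      integral ((\<lambda>u. u ^ p) ` {0<..}) F = G"
    unfolding power_image_Ioi[OF p] by blast
  have deriv: "((\<lambda>u. u ^ p) has_real_derivative real p * u ^ (p - 1)) (at u within {0<..})" for u :: real
    using DERIV_pow[of p u "{0<..}"] by simp
  have inj: "inj_on (\<lambda>u::real. u ^ p) {0<..}"
    using p by (auto simp: inj_on_def power_eq_iff_eq_base)
  have measurable: "{0::real<..} \<in> sets lebesgue"
    by (rule sets_completionI_sets) simp
  from F_image has_absolute_integral_change_of_variables_1'[OF measurable deriv inj]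
  have "(\<lambda>u. \<bar>real p * u ^ (p - 1)\<bar> * F (u ^ p)) absolutely_integrable_on {0<..} \<and>
      integral {0<..} (\<lambda>u. \<bar>real p * u ^ (p - 1)\<bar> * F (u ^ p)) = G"
    by blast
  then have transformed: "((\<lambda>u. \<bar>real p * u ^ (p - 1)\<bar> * F (u ^ p)) has_integral G) {0<..}"
    using absolutely_integrable_on_def integrable_integral by metis
  have jacobian: "\<bar>real p * u ^ (p - 1)\<bar> * F (u ^ p) = exp (- (u ^ p))" if "u \<in> {0<..}" for u
    using power_substitution_Gamma_integrand[OF p] that by (simp add: F_def)
  from has_integral_eq[OF jacobian transformed]
  have "((\<lambda>u. exp (- (u ^ p))) has_integral G) {0<..}" .
  then show ?thesis
    by (simp add: G_def has_integral_Ici_iff_Ioi)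
qed

lemma tendsto_sandwich_family:
  fixes f :: "'a \<Rightarrow> real" and lo up :: "'b \<Rightarrow> 'a \<Rightarrow> real"
  assumes "D \<noteq> bot"
    and "\<forall>\<^sub>F \<delta> in D. (\<forall>\<^sub>F x in F. lo \<delta> x \<le> f x \<and> f x \<le> up \<delta> x)
                    \<and> (lo \<delta> \<longlongrightarrow> L \<delta>) F \<and> (up \<delta> \<longlongrightarrow> U \<delta>) F"
    and "(L \<longlongrightarrow> l) D" "(U \<longlongrightarrow> l) D"
  shows "(f \<longlongrightarrow> l) F"
proof (rule tendstoI)
  fix e :: real assume "e > 0"
  then have "e / 2 > 0" by simp
  from assms(2) tendstoD[OF assms(3) this] tendstoD[OF assms(4) this]
  have "\<forall>\<^sub>F \<delta> in D. (\<forall>\<^sub>F x in F. lo \<delta> x \<le> f x \<and> f x \<le> up \<delta> x)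
      \<and> (lo \<delta> \<longlongrightarrow> L \<delta>) F \<and> (up \<delta> \<longlongrightarrow> U \<delta>) F \<and> dist (L \<delta>) l < e / 2 \<and> dist (U \<delta>) l < e / 2"
    by eventually_elim blast
  then obtain \<delta> where bounds: "\<forall>\<^sub>F x in F. lo \<delta> x \<le> f x \<and> f x \<le> up \<delta> x"
    and lim: "(lo \<delta> \<longlongrightarrow> L \<delta>) F" "(up \<delta> \<longlongrightarrow> U \<delta>) F"
    and close: "dist (L \<delta>) l < e / 2" "dist (U \<delta>) l < e / 2"
    using eventually_happens'[OF \<open>D \<noteq> bot\<close>] by blast
  from bounds tendstoD[OF lim(1) \<open>e / 2 > 0\<close>] tendstoD[OF lim(2) \<open>e / 2 > 0\<close>]
  show "\<forall>\<^sub>F x in F. dist (f x) l < e"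
  proof eventually_elim
    case (elim x)
    with close show ?case
      unfolding dist_real_def by linarith
  qed
qed

lemma decreasing_derivative_diff_bounds:
  fixes g h :: "real \<Rightarrow> real"
  assumes deriv: "\<And>s. x \<le> s \<Longrightarrow> s \<le> y \<Longrightarrow> (g has_real_derivative - h s) (at s)"
    and decr: "\<And>s t. x \<le> s \<Longrightarrow> s \<le> t \<Longrightarrow> t \<le> y \<Longrightarrow> h t \<le> h s"
    and "x < y"
  shows "(y - x) * h y \<le> g x - g y" "g x - g y \<le> (y - x) * h x"
proof -
  obtain z where z: "x < z" "z < y" "g y - g x = (y - x) * - h z"
    using MVT2[OF \<open>x < y\<close>, of g "\<lambda>s. - h s"] deriv by blast
  have "h y \<le> h z" "h z \<le> h x"
    using z by (auto intro: decr)
  then have "(y - x) * h y \<le> (y - x) * h z" "(y - x) * h z \<le> (y - x) * h x"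
    using \<open>x < y\<close> by (simp_all add: mult_left_mono)
  moreover have "g x - g y = (y - x) * h z"
    using z(3) by (simp add: algebra_simps)
  ultimately show "(y - x) * h y \<le> g x - g y" "g x - g y \<le> (y - x) * h x"
    by simp_all
qed

lemma filterlim_mult_left_at_right_0:
  "q > 0 \<Longrightarrow> filterlim (\<lambda>s::real. q * s) (at_right 0) (at_right 0)"
  by real_asymp

lemma tendsto_rescaled_at_right:
  fixes g :: "real \<Rightarrow> real"
  assumes lim: "((\<lambda>s. g s * s powr a) \<longlongrightarrow> c) (at_right 0)" and "q > 0"
  shows "((\<lambda>s. g (q * s) * s powr a) \<longlongrightarrow> q powr (- a) * c) (at_right 0)"
proof -
  from filterlim_compose[OF lim filterlim_mult_left_at_right_0[OF \<open>q > 0\<close>]]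
  have "((\<lambda>s. q powr (- a) * (g (q * s) * (q * s) powr a)) \<longlongrightarrow> q powr (- a) * c) (at_right 0)"
    by (rule tendsto_mult_left)
  moreover have "\<forall>\<^sub>F s in at_right 0. q powr (- a) * (g (q * s) * (q * s) powr a) = g (q * s) * s powr a"
    using eventually_at_right_less[of 0]
  proof eventually_elim
    case (elim s)
    with \<open>q > 0\<close> show ?case
      by (simp add: powr_mult powr_minus field_simps)
  qed
  ultimately show ?thesis
    by (rule Lim_transform_eventually)
qed

lemma decreasing_derivative_powr_bounds:
  fixes g h :: "real \<Rightarrow> real"
  assumes deriv: "\<And>s. s > 0 \<Longrightarrow> (g has_real_derivative - h s) (at s)"
    and decr: "\<And>s t. 0 < s \<Longrightarrow> s \<le> t \<Longrightarrow> h t \<le> h s"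
    and "0 < \<delta>" "\<delta> < 1" "0 < s"
  shows "(g s * s powr a - g ((1 + \<delta>) * s) * s powr a) / \<delta> \<le> h s * s powr (a + 1)"
    and "h s * s powr (a + 1) \<le> (g ((1 - \<delta>) * s) * s powr a - g s * s powr a) / \<delta>"
proof -
  have interval: "0 < (1 - \<delta>) * s" "(1 - \<delta>) * s < s" "s < (1 + \<delta>) * s"
    using assms by simp_all
  have lower: "g s - g ((1 + \<delta>) * s) \<le> ((1 + \<delta>) * s - s) * h s"
    and upper: "(s - (1 - \<delta>) * s) * h s \<le> g ((1 - \<delta>) * s) - g s"
    by (intro decreasing_derivative_diff_bounds deriv decr; use interval in linarith)+
  have scale: "s powr a * (\<delta> * s * h s) / \<delta> = h s * s powr (a + 1)"
    using assms by (simp add: powr_add field_simps)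
  have "s powr a * (g s - g ((1 + \<delta>) * s)) / \<delta> \<le> s powr a * (\<delta> * s * h s) / \<delta>"
    using lower assms by (intro divide_right_mono mult_left_mono) (auto simp: algebra_simps)
  then show "(g s * s powr a - g ((1 + \<delta>) * s) * s powr a) / \<delta> \<le> h s * s powr (a + 1)"
    unfolding scale by (simp add: algebra_simps)
  have "s powr a * (\<delta> * s * h s) / \<delta> \<le> s powr a * (g ((1 - \<delta>) * s) - g s) / \<delta>"
    using upper assms by (intro divide_right_mono mult_left_mono) (auto simp: algebra_simps)
  then show "h s * s powr (a + 1) \<le> (g ((1 - \<delta>) * s) * s powr a - g s * s powr a) / \<delta>"
    unfolding scale by (simp add: algebra_simps)
qed

theorem monotone_density:
  fixes g h :: "real \<Rightarrow> real"
  assumes "a > 0"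
    and deriv: "\<And>s. s > 0 \<Longrightarrow> (g has_real_derivative - h s) (at s)"
    and decr: "\<And>s t. 0 < s \<Longrightarrow> s \<le> t \<Longrightarrow> h t \<le> h s"
    and lim: "((\<lambda>s. g s * s powr a) \<longlongrightarrow> c) (at_right 0)"
  shows "((\<lambda>s. h s * s powr (a + 1)) \<longlongrightarrow> a * c) (at_right 0)"
proof (rule tendsto_sandwich_family[OF trivial_limit_at_right_real])
  define lo where "lo \<delta> s = (g s * s powr a - g ((1 + \<delta>) * s) * s powr a) / \<delta>" for \<delta> s :: real
  define up where "up \<delta> s = (g ((1 - \<delta>) * s) * s powr a - g s * s powr a) / \<delta>" for \<delta> s :: real
  have "\<forall>\<^sub>F \<delta> in at_right (0::real). 0 < \<delta> \<and> \<delta> < 1"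
    by (rule eventually_at_rightI[of _ 1]) auto
  then show "\<forall>\<^sub>F \<delta> in at_right 0.
      (\<forall>\<^sub>F s in at_right 0. lo \<delta> s \<le> h s * s powr (a + 1) \<and> h s * s powr (a + 1) \<le> up \<delta> s)
      \<and> (lo \<delta> \<longlongrightarrow> (c - (1 + \<delta>) powr (- a) * c) / \<delta>) (at_right 0)
      \<and> (up \<delta> \<longlongrightarrow> ((1 - \<delta>) powr (- a) * c - c) / \<delta>) (at_right 0)"
  proof eventually_elim
    case (elim \<delta>)
    have "\<forall>\<^sub>F s in at_right 0. lo \<delta> s \<le> h s * s powr (a + 1) \<and> h s * s powr (a + 1) \<le> up \<delta> s"
      using eventually_at_right_less[of 0]
      by eventually_elim (use decreasing_derivative_powr_bounds[OF deriv decr] elim in \<open>auto simp: lo_def up_def\<close>)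
    moreover have "(lo \<delta> \<longlongrightarrow> (c - (1 + \<delta>) powr (- a) * c) / \<delta>) (at_right 0)"
      "(up \<delta> \<longlongrightarrow> ((1 - \<delta>) powr (- a) * c - c) / \<delta>) (at_right 0)"
      unfolding lo_def[abs_def] up_def[abs_def] using elim
      by (auto intro!: tendsto_intros lim tendsto_rescaled_at_right[OF lim])
    ultimately show ?case
      by blast
  qed
  have "((\<lambda>\<delta>. (1 - (1 + \<delta>) powr (- a)) / \<delta>) \<longlongrightarrow> a) (at_right 0)"
    "((\<lambda>\<delta>. ((1 - \<delta>) powr (- a) - 1) / \<delta>) \<longlongrightarrow> a) (at_right 0)"
    using \<open>a > 0\<close> by real_asymp+
  then show "((\<lambda>\<delta>. (c - (1 + \<delta>) powr (- a) * c) / \<delta>) \<longlongrightarrow> a * c) (at_right 0)"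
    "((\<lambda>\<delta>. ((1 - \<delta>) powr (- a) * c - c) / \<delta>) \<longlongrightarrow> a * c) (at_right 0)"
    by (auto dest: tendsto_mult_right[of _ _ _ c] simp: algebra_simps diff_divide_distrib)
qed

definition power_theta :: "nat \<Rightarrow> real \<Rightarrow> real" where
  "power_theta p x = (\<Sum>j. exp (- (x * real (Suc j) ^ p)))"

lemma power_theta_bounds:
  assumes p: "p \<ge> 1" and "x > 0"
  shows "summable (\<lambda>j. exp (- (x * real (Suc j) ^ p)))"
    and "x powr (1 / real p) * power_theta p x \<le> Gamma (1 / real p) / real p"
    and "Gamma (1 / real p) / real p \<le> x powr (1 / real p) + x powr (1 / real p) * power_theta p x"
proof -
  define h where "h = x powr (1 / real p)"
  define f where "f u = exp (- (u ^ p))" for u :: real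
  have "h > 0"
    using \<open>x > 0\<close> by (simp add: h_def)
  have sample: "f (h * real (Suc j)) = exp (- (x * real (Suc j) ^ p))" for j
    using power_powr_inverse[OF p \<open>x > 0\<close>] by (simp add: f_def h_def power_mult_distrib)
  have cont: "continuous_on {0..} f"
    by (auto simp: f_def intro!: continuous_intros)
  have nonneg: "\<And>u. 0 \<le> u \<Longrightarrow> 0 \<le> f u"
    by (simp add: f_def)
  have decr: "\<And>u v. 0 \<le> u \<Longrightarrow> u \<le> v \<Longrightarrow> f v \<le> f u"
    by (simp add: f_def power_mono)
  note integral = has_integral_exp_neg_power[OF p, folded f_def]
  have riemann: "summable (\<lambda>j. f (h * real (Suc j)))"
    "h * (\<Sum>j. f (h * real (Suc j))) \<le> Gamma (1 / real p) / real p"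
    "Gamma (1 / real p) / real p \<le> h * f 0 + h * (\<Sum>j. f (h * real (Suc j)))"
    using decreasing_riemann_sum_le_integral[OF cont _ _ integral \<open>h > 0\<close>]
      integral_le_decreasing_riemann_sum[OF cont _ _ integral \<open>h > 0\<close>] nonneg decr by blast+
  show "summable (\<lambda>j. exp (- (x * real (Suc j) ^ p)))"
    using riemann(1) unfolding sample .
  show "x powr (1 / real p) * power_theta p x \<le> Gamma (1 / real p) / real p"
    using riemann(2) unfolding sample by (simp add: power_theta_def h_def)
  show "Gamma (1 / real p) / real p \<le> x powr (1 / real p) + x powr (1 / real p) * power_theta p x"
    using riemann(3) p unfolding sample by (simp add: power_theta_def h_def f_def zero_power)
qed

lemma power_theta_nonneg: "p \<ge> 1 \<Longrightarrow> x > 0 \<Longrightarrow> 0 \<le> power_theta p x"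
  unfolding power_theta_def by (intro suminf_nonneg power_theta_bounds(1)) auto

lemma tendsto_powr_mult_power_theta:
  assumes p: "p \<ge> 1"
  shows "((\<lambda>x. x powr (1 / real p) * power_theta p x) \<longlongrightarrow> Gamma (1 / real p) / real p) (at_right 0)"
proof (rule tendsto_sandwich)
  have pos: "\<forall>\<^sub>F x in at_right (0::real). x > 0"
    by (simp add: eventually_at_right_less)
  show "\<forall>\<^sub>F x in at_right 0. x powr (1 / real p) * power_theta p x \<le> Gamma (1 / real p) / real p"
    using pos by eventually_elim (rule power_theta_bounds(2)[OF p])
  show "\<forall>\<^sub>F x in at_right 0. Gamma (1 / real p) / real p - x powr (1 / real p)
      \<le> x powr (1 / real p) * power_theta p x"
    using pos by eventually_elim (use power_theta_bounds(3)[OF p] in force)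
  have "((\<lambda>x::real. x powr (1 / real p)) \<longlongrightarrow> 0) (at_right 0)"
    using p by real_asymp
  then show "((\<lambda>x. Gamma (1 / real p) / real p - x powr (1 / real p)) \<longlongrightarrow> Gamma (1 / real p) / real p) (at_right 0)"
    by (auto intro: tendsto_eq_intros)
qed simp

(* polylog_exp m u is the polylogarithm Li_(1-m) (e^u). *)
definition polylog_exp :: "nat \<Rightarrow> real \<Rightarrow> real" where
  "polylog_exp m u = (\<Sum>k. real (Suc k) powr (real m - 1) * exp (real (Suc k) * u))"

lemma polylog_exp_nonneg: "u < 0 \<Longrightarrow> 0 \<le> polylog_exp m u"
  unfolding polylog_exp_def by (intro suminf_nonneg summable_powr_mult_exp) auto

lemma polylog_exp_le_exp_mult:
  assumes "v \<le> b" "b < 0"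
  shows "polylog_exp m v \<le> exp (v - b) * polylog_exp m b"
proof -
  have "exp (real (Suc k) * v) \<le> exp (v - b) * exp (real (Suc k) * b)" for k
  proof -
    have "real (Suc k) * (v - b) \<le> 1 * (v - b)"
      using assms by (intro mult_right_mono_neg) auto
    then show ?thesis
      by (simp add: algebra_simps flip: exp_add)
  qed
  then have "polylog_exp m v \<le> (\<Sum>k. exp (v - b) * (real (Suc k) powr (real m - 1) * exp (real (Suc k) * b)))"
    unfolding polylog_exp_def using assms
    by (intro suminf_le summable_mult summable_powr_mult_exp) (auto simp: mult.left_commute)
  also have "\<dots> = exp (v - b) * polylog_exp m b"
    unfolding polylog_exp_def using assms by (intro suminf_mult summable_powr_mult_exp)
  finally show ?thesis .
qed

lemma has_real_derivative_polylog_exp: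
  assumes "u < 0"
  shows "(polylog_exp m has_real_derivative polylog_exp (Suc m) u) (at u)"
proof -
  have powr_Suc: "real (Suc k) powr (real m - 1) * real (Suc k) = real (Suc k) powr (real (Suc m) - 1)" for k
  proof -
    have "real (Suc k) powr (real (Suc m) - 1) = real (Suc k) powr ((real m - 1) + 1)"
      by simp
    also have "\<dots> = real (Suc k) powr (real m - 1) * real (Suc k) powr 1"
      by (rule powr_add)
    finally show ?thesis
      by simp
  qed
  have deriv: "((\<lambda>x. real (Suc k) powr (real m - 1) * exp (real (Suc k) * x)) has_real_derivative
      real (Suc k) powr (real (Suc m) - 1) * exp (real (Suc k) * x)) (at x)" for k x
  proof (rule DERIV_cong)
    show "((\<lambda>x. real (Suc k) powr (real m - 1) * exp (real (Suc k) * x)) has_real_derivative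
        real (Suc k) powr (real m - 1) * (exp (real (Suc k) * x) * real (Suc k))) (at x)"
      by (auto intro!: derivative_eq_intros)
    show "real (Suc k) powr (real m - 1) * (exp (real (Suc k) * x) * real (Suc k))
        = real (Suc k) powr (real (Suc m) - 1) * exp (real (Suc k) * x)"
      unfolding powr_Suc[symmetric] by (simp only: mult_ac)
  qed
  have bound: "\<bar>real (Suc k) powr (real (Suc m) - 1) * exp (real (Suc k) * x)\<bar>
      \<le> real (Suc k) powr (real (Suc m) - 1) * exp (real (Suc k) * (u / 2))" if "x \<le> u / 2" for k x
    using that by (auto intro!: mult_left_mono)
  show ?thesis
    unfolding polylog_exp_def using assms
    by (intro has_real_derivative_suminf_dominated[where b = "u / 2", OF deriv bound] summable_powr_mult_exp) auto
qed

lemma polylog_exp_0: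
  assumes "u < 0"
  shows "polylog_exp 0 u = - ln (1 - exp u)"
proof -
  have "\<bar>- exp u\<bar> < 1"
    using assms by simp
  from ln_series'[OF this] have "(\<lambda>n. - (exp u ^ n) / of_nat n) sums ln (1 - exp u)"
    by simp
  then have "(\<lambda>n. - (exp u ^ Suc n) / of_nat (Suc n)) sums ln (1 - exp u)"
    by (subst sums_Suc_iff) simp
  then have "(\<lambda>n. exp u ^ Suc n / of_nat (Suc n)) sums (- ln (1 - exp u))"
    using sums_minus by fastforce
  moreover have "exp u ^ Suc n / of_nat (Suc n) = real (Suc n) powr (real 0 - 1) * exp (real (Suc n) * u)" for n
    by (simp add: powr_minus_divide exp_of_nat_mult del: of_nat_Suc)
  ultimately show ?thesis
    unfolding polylog_exp_def by (simp add: sums_iff)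
qed

definition fulcrum_series :: "nat \<Rightarrow> nat \<Rightarrow> real \<Rightarrow> real" where
  "fulcrum_series p m t = (\<Sum>j. (real (Suc j) ^ p) ^ m * polylog_exp m (real (Suc j) ^ p * t))"

lemma fulcrum_series_term_bounds:
  assumes "p \<ge> 1" "x \<le> b" "b < 0"
  shows "0 \<le> (real (Suc j) ^ p) ^ m * polylog_exp m (real (Suc j) ^ p * x)"
    and "(real (Suc j) ^ p) ^ m * polylog_exp m (real (Suc j) ^ p * x)
           \<le> real (Suc j) powr real (p * m) * exp (real (Suc j) * b) * (exp (- b) * polylog_exp m b)"
proof -
  define J where "J = real (Suc j)"
  have "1 \<le> J"
    by (simp add: J_def)
  then have "J \<le> J ^ p"
    using power_increasing[of 1 p J] assms(1) by simp
  have "J ^ p * x \<le> J * x"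
    using \<open>J \<le> J ^ p\<close> assms by (intro mult_right_mono_neg) auto
  also have "\<dots> \<le> J * b"
    using \<open>1 \<le> J\<close> assms by (intro mult_left_mono) auto
  finally have le_Jb: "J ^ p * x \<le> J * b" .
  have "J * b \<le> 1 * b"
    using \<open>1 \<le> J\<close> assms by (intro mult_right_mono_neg) auto
  with le_Jb have le_b: "J ^ p * x \<le> b"
    by simp
  show "0 \<le> (real (Suc j) ^ p) ^ m * polylog_exp m (real (Suc j) ^ p * x)"
    unfolding J_def[symmetric] using le_b assms \<open>1 \<le> J\<close>
    by (intro mult_nonneg_nonneg polylog_exp_nonneg) auto
  have "polylog_exp m (J ^ p * x) \<le> exp (J ^ p * x - b) * polylog_exp m b"
    using le_b assms by (intro polylog_exp_le_exp_mult)
  also have "\<dots> \<le> exp (J * b - b) * polylog_exp m b"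
    using le_Jb assms by (intro mult_right_mono polylog_exp_nonneg) auto
  finally have "(J ^ p) ^ m * polylog_exp m (J ^ p * x) \<le> (J ^ p) ^ m * (exp (J * b - b) * polylog_exp m b)"
    using \<open>1 \<le> J\<close> by (intro mult_left_mono) auto
  moreover have "(J ^ p) ^ m = J powr real (p * m)"
    using \<open>1 \<le> J\<close> by (simp add: powr_realpow flip: power_mult of_nat_mult)
  ultimately show "(real (Suc j) ^ p) ^ m * polylog_exp m (real (Suc j) ^ p * x)
      \<le> real (Suc j) powr real (p * m) * exp (real (Suc j) * b) * (exp (- b) * polylog_exp m b)"
    unfolding J_def[symmetric] by (simp add: exp_diff exp_minus field_simps)
qed

lemma summable_fulcrum_series:
  assumes "p \<ge> 1" "t < 0"
  shows "summable (\<lambda>j. (real (Suc j) ^ p) ^ m * polylog_exp m (real (Suc j) ^ p * t))"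
proof (rule summable_comparison_test)
  show "summable (\<lambda>j. real (Suc j) powr real (p * m) * exp (real (Suc j) * t) * (exp (- t) * polylog_exp m t))"
    by (intro summable_mult2 summable_powr_mult_exp assms)
  show "\<exists>N. \<forall>j\<ge>N. norm ((real (Suc j) ^ p) ^ m * polylog_exp m (real (Suc j) ^ p * t))
      \<le> real (Suc j) powr real (p * m) * exp (real (Suc j) * t) * (exp (- t) * polylog_exp m t)"
    using fulcrum_series_term_bounds[OF assms(1) order_refl assms(2)] by auto
qed

lemma fulcrum_series_nonneg: "p \<ge> 1 \<Longrightarrow> t < 0 \<Longrightarrow> 0 \<le> fulcrum_series p m t"
  unfolding fulcrum_series_def
  by (intro suminf_nonneg summable_fulcrum_series fulcrum_series_term_bounds(1)) auto

lemma has_real_derivative_fulcrum_series: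
  assumes "p \<ge> 1" "t < 0"
  shows "(fulcrum_series p m has_real_derivative fulcrum_series p (Suc m) t) (at t)"
proof -
  have deriv: "((\<lambda>x. (real (Suc j) ^ p) ^ m * polylog_exp m (real (Suc j) ^ p * x)) has_real_derivative
      (real (Suc j) ^ p) ^ Suc m * polylog_exp (Suc m) (real (Suc j) ^ p * x)) (at x)"
    if "x \<le> t / 2" for j x
  proof -
    have "real (Suc j) ^ p * x < 0"
      using that assms by (simp add: mult_pos_neg)
    moreover have "((\<lambda>x. real (Suc j) ^ p * x) has_real_derivative real (Suc j) ^ p) (at x)"
      by (auto intro!: derivative_eq_intros)
    ultimately have "((\<lambda>x. polylog_exp m (real (Suc j) ^ p * x)) has_real_derivative
        polylog_exp (Suc m) (real (Suc j) ^ p * x) * real (Suc j) ^ p) (at x)"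
      by (rule DERIV_chain2[OF has_real_derivative_polylog_exp])
    from DERIV_cmult[OF this, of "(real (Suc j) ^ p) ^ m"] show ?thesis
      by (simp add: mult_ac)
  qed
  have bound: "\<bar>(real (Suc j) ^ p) ^ Suc m * polylog_exp (Suc m) (real (Suc j) ^ p * x)\<bar>
      \<le> real (Suc j) powr real (p * Suc m) * exp (real (Suc j) * (t / 2)) * (exp (- (t / 2)) * polylog_exp (Suc m) (t / 2))"
    if "x \<le> t / 2" for j x
    using fulcrum_series_term_bounds[OF assms(1) that, of j "Suc m"] assms by simp
  show ?thesis
    unfolding fulcrum_series_def using assms
    by (intro has_real_derivative_suminf_dominated[where b = "t / 2", OF deriv bound]
        summable_mult2 summable_powr_mult_exp summable_fulcrum_series) auto
qed

lemma fulcrum_eq_fulcrum_series: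
  assumes "p \<ge> 1" "t < 0"
  shows "fulcrum p t = fulcrum_series p 0 t"
proof -
  have term_eq: "(real (Suc j) ^ p) ^ 0 * polylog_exp 0 (real (Suc j) ^ p * t)
      = - ln (1 - exp (real (Suc j) ^ p * t))" for j
    using assms by (simp add: polylog_exp_0 mult_pos_neg)
  have "summable (\<lambda>j. - ln (1 - exp (real (Suc j) ^ p * t)))"
    using summable_fulcrum_series[OF assms, of 0] unfolding term_eq .
  then have "fulcrum p t = (\<Sum>j. - ln (1 - exp (real (Suc j) ^ p * t)))"
    unfolding fulcrum_def by (subst suminf_minus) (auto simp: summable_minus_iff)
  then show ?thesis
    unfolding fulcrum_series_def term_eq .
qed

lemma higher_deriv_fulcrum:
  assumes "p \<ge> 1" "t < 0"
  shows "(deriv ^^ m) (fulcrum p) t = fulcrum_series p m t"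
  using assms(2)
proof (induction m arbitrary: t)
  case 0
  then show ?case
    using fulcrum_eq_fulcrum_series[OF assms(1)] by simp
next
  case (Suc m)
  have "\<forall>\<^sub>F x in nhds t. (deriv ^^ m) (fulcrum p) x = fulcrum_series p m x"
    using eventually_nhds_in_open[of "{..<0}" t] Suc by (auto elim!: eventually_mono)
  then have "deriv ((deriv ^^ m) (fulcrum p)) t = deriv (fulcrum_series p m) t"
    by (rule deriv_cong_ev) simp
  also have "\<dots> = fulcrum_series p (Suc m) t"
    by (rule DERIV_imp_deriv[OF has_real_derivative_fulcrum_series[OF assms(1) Suc.prems]])
  finally show ?case
    by simp
qed

lemma fulcrum_series_mono:
  assumes "p \<ge> 1" "t \<le> t'" "t' < 0"
  shows "fulcrum_series p m t \<le> fulcrum_series p m t'"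
  using assms(2)
proof (rule DERIV_nonneg_imp_nondecreasing)
  fix x assume "t \<le> x" "x \<le> t'"
  with assms have "x < 0"
    by simp
  then show "\<exists>y. (fulcrum_series p m has_real_derivative y) (at x) \<and> y \<ge> 0"
    using has_real_derivative_fulcrum_series fulcrum_series_nonneg assms(1) by blast
qed

lemma fulcrum_series_0_sums_power_theta:
  assumes p: "p \<ge> 1" and "s > 0"
  shows "(\<lambda>k. power_theta p (real (Suc k) * s) / real (Suc k)) sums fulcrum_series p 0 (- s)"
proof -
  define u where "u j k = real (Suc k) powr (real 0 - 1) * exp (real (Suc k) * (real (Suc j) ^ p * - s))" for j k
  have neg: "real (Suc j) ^ p * - s < 0" for j
    using \<open>s > 0\<close> by (simp add: mult_pos_neg)
  have rows: "summable (u j)" for j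
    unfolding u_def[abs_def] by (rule summable_powr_mult_exp[OF neg])
  have row_sum: "(\<Sum>k. u j k) = (real (Suc j) ^ p) ^ 0 * polylog_exp 0 (real (Suc j) ^ p * - s)" for j
    by (simp add: u_def polylog_exp_def)
  have column_sum: "(\<Sum>j. u j k) = power_theta p (real (Suc k) * s) / real (Suc k)" for k
  proof -
    have "u j k = exp (- (real (Suc k) * s * real (Suc j) ^ p)) / real (Suc k)" for j
      by (simp add: u_def powr_minus_divide algebra_simps del: of_nat_Suc)
    moreover have "summable (\<lambda>j. exp (- (real (Suc k) * s * real (Suc j) ^ p)))"
      using \<open>s > 0\<close> by (intro power_theta_bounds(1)[OF p]) simp
    ultimately show ?thesis
      by (simp add: power_theta_def suminf_divide)
  qed
  have "summable (\<lambda>j. \<Sum>k. u j k)"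
    unfolding row_sum using summable_fulcrum_series[OF p, of "- s" 0] \<open>s > 0\<close> by simp
  then have "(\<lambda>k. \<Sum>j. u j k) sums (\<Sum>j. \<Sum>k. u j k)"
    by (intro sums_swap_nonneg rows) (simp add: u_def)
  then show ?thesis
    unfolding column_sum row_sum fulcrum_series_def .
qed

lemma fulcrum_series_0_mult_powr_sums:
  assumes p: "p \<ge> 1" and "s > 0"
  shows "(\<lambda>k. real (Suc k) powr (- 1 - 1 / real p) *
      ((real (Suc k) * s) powr (1 / real p) * power_theta p (real (Suc k) * s)))
    sums (fulcrum_series p 0 (- s) * s powr (1 / real p))"
proof -
  have "real (Suc k) powr (- 1 - 1 / real p) * real (Suc k) powr (1 / real p) = 1 / real (Suc k)" for k
    by (simp add: powr_minus_divide flip: powr_add del: of_nat_Suc)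
  then have rescale: "power_theta p (real (Suc k) * s) / real (Suc k) * s powr (1 / real p)
      = real (Suc k) powr (- 1 - 1 / real p) *
        ((real (Suc k) * s) powr (1 / real p) * power_theta p (real (Suc k) * s))" for k
    using \<open>s > 0\<close> by (simp add: powr_mult field_simps del: of_nat_Suc)
  from sums_mult2[OF fulcrum_series_0_sums_power_theta[OF assms], of "s powr (1 / real p)"]
  show ?thesis
    unfolding rescale .
qed

lemma tendsto_fulcrum_series_0:
  assumes p: "p \<ge> 1"
  shows "((\<lambda>s. fulcrum_series p 0 (- s) * s powr (1 / real p)) \<longlongrightarrow>
           1 / real p * zeta_real (1 + 1 / real p) * Gamma (1 / real p)) (at_right 0)"
proof -
  define G where "G = Gamma (1 / real p) / real p"
  define T where "T x = x powr (1 / real p) * power_theta p x" for x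
  define a where "a k s = real (Suc k) powr (- 1 - 1 / real p) * T (real (Suc k) * s)" for k s
  have zeta_terms: "summable (\<lambda>k. real (Suc k) powr (- 1 - 1 / real p))"
    using summable_zeta_real_terms[of "1 + 1 / real p"] p
    by (simp add: powr_minus_divide[symmetric] del: of_nat_Suc)
  have lim: "((\<lambda>s. a k s) \<longlongrightarrow> real (Suc k) powr (- 1 - 1 / real p) * G) (at_right 0)" for k
    using filterlim_compose[OF tendsto_powr_mult_power_theta[OF p] filterlim_mult_left_at_right_0]
    unfolding a_def T_def G_def by (intro tendsto_mult_left) simp
  have "0 \<le> T x \<and> T x \<le> G" if "x > 0" for x
    using power_theta_bounds(2)[OF p that] power_theta_nonneg[OF p that] that by (simp add: T_def G_def)
  then have bound: "\<forall>\<^sub>F (k, s) in at_top \<times>\<^sub>F at_right 0. norm (a k s) \<le> real (Suc k) powr (- 1 - 1 / real p) * G"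
    unfolding eventually_prod_filter
    by (intro exI[of _ "\<lambda>_. True"] exI[of _ "\<lambda>s. s > 0"])
       (auto simp: eventually_at_right_less a_def abs_mult intro!: mult_left_mono)
  have "((\<lambda>s. \<Sum>k. a k s) \<longlongrightarrow> (\<Sum>k. real (Suc k) powr (- 1 - 1 / real p) * G)) (at_right 0)"
    using tannerys_theorem[OF lim bound summable_mult2[OF zeta_terms]] by simp
  moreover have "(\<Sum>k. real (Suc k) powr (- 1 - 1 / real p) * G) = 1 / real p * zeta_real (1 + 1 / real p) * Gamma (1 / real p)"
    using suminf_mult2[OF zeta_terms, of G]
    by (simp add: zeta_real_def G_def powr_minus_divide[symmetric] del: of_nat_Suc)
  moreover have "\<forall>\<^sub>F s in at_right 0. (\<Sum>k. a k s) = fulcrum_series p 0 (- s) * s powr (1 / real p)"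
    using eventually_at_right_less
    by (rule eventually_mono) (auto simp: a_def T_def sums_iff dest: fulcrum_series_0_mult_powr_sums[OF p])
  ultimately show ?thesis
    using tendsto_cong by force
qed

lemma tendsto_fulcrum_series:
  assumes p: "p \<ge> 1"
  shows "((\<lambda>s. fulcrum_series p m (- s) * s powr (real m + 1 / real p)) \<longlongrightarrow>
           1 / real p * zeta_real (1 + 1 / real p) * Gamma (real m + 1 / real p)) (at_right 0)"
proof (induction m)
  case 0
  then show ?case
    using tendsto_fulcrum_series_0[OF p] by simp
next
  case (Suc m)
  define a where "a = real m + 1 / real p"
  have "a > 0"
    using p by (simp add: a_def add_nonneg_pos)
  have deriv: "((\<lambda>s. fulcrum_series p m (- s)) has_real_derivative - fulcrum_series p (Suc m) (- s)) (at s)"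
    if "s > 0" for s
  proof -
    have "((\<lambda>s. fulcrum_series p m (- s)) has_real_derivative fulcrum_series p (Suc m) (- s) * - 1) (at s)"
      using \<open>s > 0\<close>
      by (intro DERIV_chain2[OF has_real_derivative_fulcrum_series[OF p]]) (auto intro!: derivative_eq_intros)
    then show ?thesis
      by simp
  qed
  have decr: "fulcrum_series p (Suc m) (- t) \<le> fulcrum_series p (Suc m) (- s)" if "0 < s" "s \<le> t" for s t
    using that by (intro fulcrum_series_mono[OF p]) auto
  from monotone_density[OF \<open>a > 0\<close> deriv decr Suc.IH[folded a_def]]
  have "((\<lambda>s. fulcrum_series p (Suc m) (- s) * s powr (a + 1)) \<longlongrightarrow>
      a * (1 / real p * zeta_real (1 + 1 / real p) * Gamma a)) (at_right 0)" .
  moreover have "a \<notin> \<int>\<^sub>\<le>\<^sub>0"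
    using \<open>a > 0\<close> by (auto elim!: nonpos_Ints_cases)
  then have "a * Gamma a = Gamma (real (Suc m) + 1 / real p)"
    using Gamma_plus1[of a] by (simp add: a_def add_ac)
  ultimately show ?case
    by (simp add: a_def mult_ac add_ac)
qed

theorem proposition4p2:
  fixes p m :: nat
  assumes "p \<ge> 1"
  shows "(\<lambda>s. (deriv ^^ m) (fulcrum p) (- s)) \<sim>[at_right 0]
         (\<lambda>s. (1 / real p) * zeta_real (1 + 1 / real p) * Gamma (real m + 1 / real p)
               / s powr (real m + 1 / real p))"
proof -
  define a where "a = real m + 1 / real p"
  define K where "K = 1 / real p * zeta_real (1 + 1 / real p) * Gamma a"
  have "a > 0"
    using assms by (simp add: a_def add_nonneg_pos)
  then have "K > 0"
    unfolding K_def using assms zeta_real_pos[of "1 + 1 / real p"]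
    by (intro mult_pos_pos Gamma_real_pos) auto
  then have "K \<noteq> 0"
    by simp
  have "\<forall>\<^sub>F s in at_right 0. fulcrum_series p m (- s) * s powr a = (deriv ^^ m) (fulcrum p) (- s) / (1 / s powr a)"
    using eventually_at_right_less by (rule eventually_mono) (simp add: higher_deriv_fulcrum[OF assms])
  with tendsto_fulcrum_series[OF assms, of m, folded a_def, folded K_def]
  have "((\<lambda>s. (deriv ^^ m) (fulcrum p) (- s) / (1 / s powr a)) \<longlongrightarrow> K) (at_right 0)"
    by (rule Lim_transform_eventually)
  from asymp_equivI'_const[OF this \<open>K \<noteq> 0\<close>] show ?thesis
    by (simp add: K_def a_def)
qed

end
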